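(* Let $n\ge3$, $p=\frac{n+2}{n-2}$, $q=\frac n{n-2}$, $c_+>0$. Let $u\in C^2(H)\cap C^1(\overline H)$ satisfy $\Delta u=n(n-2)u^p$, $u>0$ in $H$, and $\frac{\partial u}{\partial t}=-c_+u^q$ on $\partial H$. For $b\in\partial H=\mathbb{R}^{n-1}$ define $u_b(x',t)=u(x'+b,t)$, $v_b(x)=|x|^{2-n}u_b(x/|x|^2)$, for $\lambda>0$ $$w_{\lambda,b}(x)=v_b(x)-\frac{\lambda^{n-2}}{|x|^{n-2}}v_b\Big(\frac{\lambda^2x}{|x|^2}\Big),$$ and $$\lambda_b=\inf\{\lambda>0:\ w_{\mu,b}(x)\ge0 \text{ for all } x\in\overline{B_\mu^+}\setminus\{0\} \text{ and all } \mu\in(\lambda,\infty)\}.$$ If $\lambda_b=0$ for all $b\in\partial H$, then $c_+=n-2$ and $$u(x',t)=u(0,t)=\big(2t+u(0)^{-2/(n-2)}\big)^{-(n-2)/2}\quad\text{for all }(x',t)\in H,$$ where $u(0)$ denotes the value of $u$ at the origin of $\overline H$.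
   Context: $H=\{(x',t): x'\in\mathbb{R}^{n-1}, t>0\}$, $\partial H=\{t=0\}$ identified with $\mathbb{R}^{n-1}$; $B_\mu^+=\{x\in H:|x|<\mu\}$. $\partial u/\partial t$ on $\partial H$ is the derivative in $t$ at $t=0$. *)

theory Defs
  imports "HOL-Analysis.Analysis"
begin

text \<open>Points of R^n = R^(n-1) x R are pairs (x', t) :: 'a \<times> real with
  'a a Euclidean space of dimension n - 1.\<close>

definition upper_half :: "('a::euclidean_space \<times> real) set" where
  "upper_half = {z. snd z > 0}"

definition half_ball :: "real \<Rightarrow> ('a::euclidean_space \<times> real) set" where
  "half_ball \<mu> = {z \<in> upper_half. norm z < \<mu>}"

definition partial :: "('v::real_normed_vector \<Rightarrow> real) \<Rightarrow> 'v \<Rightarrow> 'v \<Rightarrow> real" where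
  "partial u e z = deriv (\<lambda>s. u (z + s *\<^sub>R e)) 0"

definition C1_on :: "'v::euclidean_space set \<Rightarrow> ('v \<Rightarrow> real) \<Rightarrow> bool" where
  "C1_on S u \<longleftrightarrow> continuous_on S u \<and>
     (\<forall>e\<in>Basis. (\<forall>z\<in>S. (\<lambda>s. u (z + s *\<^sub>R e)) differentiable (at 0))
        \<and> continuous_on S (partial u e))"

definition C2_on :: "'v::euclidean_space set \<Rightarrow> ('v \<Rightarrow> real) \<Rightarrow> bool" where
  "C2_on S u \<longleftrightarrow> C1_on S u \<and> (\<forall>e\<in>Basis. C1_on S (partial u e))"

definition C1_closure :: "'v::euclidean_space set \<Rightarrow> ('v \<Rightarrow> real) \<Rightarrow> bool" where
  "C1_closure S u \<longleftrightarrow> C1_on S u \<and> continuous_on (closure S) u \<and>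
     (\<forall>e\<in>Basis. \<exists>g. continuous_on (closure S) g \<and> (\<forall>z\<in>S. g z = partial u e z))"

definition laplacian :: "('v::euclidean_space \<Rightarrow> real) \<Rightarrow> 'v \<Rightarrow> real" where
  "laplacian u z = (\<Sum>e\<in>Basis. partial (partial u e) e z)"

definition dimn :: "'a::euclidean_space itself \<Rightarrow> real" where
  "dimn _ = real (DIM('a) + 1)"

definition shift_u :: "('a::euclidean_space \<times> real \<Rightarrow> real) \<Rightarrow> 'a \<Rightarrow> 'a \<times> real \<Rightarrow> real" where
  "shift_u u b z = u (fst z + b, snd z)"

definition kelvin_v :: "('a::euclidean_space \<times> real \<Rightarrow> real) \<Rightarrow> 'a \<Rightarrow> 'a \<times> real \<Rightarrow> real" where
  "kelvin_v u b x = norm x powr (2 - dimn TYPE('a)) * shift_u u b (x /\<^sub>R (norm x)\<^sup>2)"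

definition w_fun :: "('a::euclidean_space \<times> real \<Rightarrow> real) \<Rightarrow> real \<Rightarrow> 'a \<Rightarrow> 'a \<times> real \<Rightarrow> real" where
  "w_fun u lam b x = kelvin_v u b x
     - lam powr (dimn TYPE('a) - 2) / norm x powr (dimn TYPE('a) - 2)
       * kelvin_v u b ((lam\<^sup>2 / (norm x)\<^sup>2) *\<^sub>R x)"

text \<open>lambda_b as an infimum in the extended reals (inf of the empty set is +infinity).\<close>
definition lambda_b :: "('a::euclidean_space \<times> real \<Rightarrow> real) \<Rightarrow> 'a \<Rightarrow> ereal" where
  "lambda_b u b = Inf (ereal ` {lam. lam > 0 \<and>
      (\<forall>\<mu>. \<mu> > lam \<longrightarrow> (\<forall>x \<in> closure (half_ball \<mu>) - {0}. w_fun u \<mu> b x \<ge> 0))})"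

end

theory Submission
  imports Defs
begin

(* Since lambda_b = 0, for every centre (b, 0) on the boundary and every r in (0, 1) the
   reflection inequality w >= 0 becomes the dilation inequality
   r^(n-2) u((b, 0) + r^2 (z - (b, 0))) <= u z.  Moving the centre to infinity in a horizontal
   direction while r -> 1, so that the dilated point stays on the horizontal line through z,
   shows that u is monotone, hence constant, in every horizontal direction.  So u(x', t) = f(t)
   with f'' = n(n-2) f^((n+2)/(n-2)) on (0, oo).  The energy f'^2 - (n-2)^2 f^(2n/(n-2)) is
   constant, and positivity of f on the whole half-line forces f' < 0 and zero energy; hence
   f^(-2/(n-2)) is affine with slope 2, and the boundary condition at t = 0 reads c_+ = n - 2. *)

lemma DERIV_affine_lower_bound:
  fixes F F' :: "real \<Rightarrow> real"
  assumes "a \<le> b"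
    and "\<And>x. a \<le> x \<Longrightarrow> x \<le> b \<Longrightarrow> (F has_real_derivative F' x) (at x)"
    and "\<And>x. a \<le> x \<Longrightarrow> x \<le> b \<Longrightarrow> m \<le> F' x"
  shows "F a + m * (b - a) \<le> F b"
proof (cases "a = b")
  case False
  then have "a < b" using assms(1) by simp
  from MVT2[OF this assms(2)] obtain z where z: "a < z" "z < b" "F b - F a = (b - a) * F' z"
    by blast
  have "m * (b - a) \<le> F' z * (b - a)"
    using assms(3)[of z] z \<open>a < b\<close> by (intro mult_right_mono) auto
  then show ?thesis using z by (simp add: algebra_simps)
qed simp

lemma DERIV_affine_upper_bound:
  fixes F F' :: "real \<Rightarrow> real"
  assumes "a \<le> b"
    and "\<And>x. a \<le> x \<Longrightarrow> x \<le> b \<Longrightarrow> (F has_real_derivative F' x) (at x)"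
    and "\<And>x. a \<le> x \<Longrightarrow> x \<le> b \<Longrightarrow> F' x \<le> m"
  shows "F b \<le> F a + m * (b - a)"
proof -
  have "(- F) a + (- m) * (b - a) \<le> (- F) b"
    by (rule DERIV_affine_lower_bound[where F' = "\<lambda>x. - F' x"])
      (use assms in \<open>auto intro: derivative_intros\<close>)
  then show ?thesis by simp
qed

locale yamabe_ode_halfline =
  fixes n :: real and f f' f'' :: "real \<Rightarrow> real"
  assumes n_gt_2: "n > 2"
    and pos: "\<And>t. t > 0 \<Longrightarrow> f t > 0"
    and has_deriv: "\<And>t. t > 0 \<Longrightarrow> (f has_real_derivative f' t) (at t)"
    and has_deriv2: "\<And>t. t > 0 \<Longrightarrow> (f' has_real_derivative f'' t) (at t)"
    and ode: "\<And>t. t > 0 \<Longrightarrow> f'' t = n * (n - 2) * f t powr ((n + 2) / (n - 2))"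
begin

definition energy :: "real \<Rightarrow> real" where
  "energy t = (f' t)\<^sup>2 - (n - 2)\<^sup>2 * (f t powr (n / (n - 2)))\<^sup>2"

lemma deriv2_pos:
  assumes "t > 0"
  shows "f'' t > 0"
  using ode[OF assms] pos[OF assms] n_gt_2 by simp

lemma deriv_strict_mono:
  assumes "0 < s" "s < t"
  shows "f' s < f' t"
proof (rule DERIV_pos_imp_increasing[OF assms(2)])
  fix x assume "s \<le> x"
  then have "x > 0" using assms by simp
  then show "\<exists>y. DERIV f' x :> y \<and> y > 0" using has_deriv2 deriv2_pos by blast
qed

lemma has_deriv_energy:
  assumes t: "t > 0"
  shows "(energy has_real_derivative 0) (at t)"
proof -
  define q where "q = n / (n - 2)"
  define P where "P t = f t powr q" for t
  have dP: "(P has_real_derivative q * f t powr (q - 1) * f' t) (at t)"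
    using DERIV_fun_powr[OF has_deriv[OF t] pos[OF t], of q] by (simp add: P_def[abs_def])
  have D: "(energy has_real_derivative
      2 * f' t * f'' t - (n - 2)\<^sup>2 * (2 * P t * (q * f t powr (q - 1) * f' t))) (at t)"
    unfolding energy_def[abs_def] q_def[symmetric] P_def[symmetric]
    by (auto intro!: derivative_eq_intros dP has_deriv2[OF t])
  have key: "(n - 2)\<^sup>2 * (P t * (q * f t powr (q - 1))) = n * (n - 2) * f t powr ((n + 2) / (n - 2))"
  proof -
    have "q + (q - 1) = (n + 2) / (n - 2)"
      using n_gt_2 by (simp add: q_def divide_simps)
    then have "P t * f t powr (q - 1) = f t powr ((n + 2) / (n - 2))"
      by (simp add: P_def powr_add[symmetric])
    moreover have "(n - 2)\<^sup>2 * q = n * (n - 2)"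
      using n_gt_2 by (simp add: q_def power2_eq_square)
    ultimately show ?thesis by (metis mult.assoc mult.left_commute)
  qed
  have "2 * f' t * f'' t - (n - 2)\<^sup>2 * (2 * P t * (q * f t powr (q - 1) * f' t))
      = 2 * f' t * (f'' t - (n - 2)\<^sup>2 * (P t * (q * f t powr (q - 1))))"
    by (simp add: algebra_simps)
  also have "\<dots> = 0"
    unfolding key ode[OF t] by simp
  finally show ?thesis by (rule DERIV_cong[OF D])
qed

lemma energy_constant:
  assumes "t > 0"
  shows "energy t = energy 1"
  by (rule DERIV_isconst3[of 0 "t + 1"]) (use assms has_deriv_energy in auto)

lemma deriv_squared:
  assumes "t > 0"
  shows "(f' t)\<^sup>2 = (n - 2)\<^sup>2 * (f t powr (n / (n - 2)))\<^sup>2 + energy 1"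
  using energy_constant[OF assms] unfolding energy_def by simp

lemma deriv_mono:
  assumes "0 < s" "s \<le> t"
  shows "f' s \<le> f' t"
  using deriv_strict_mono[of s t] assms by (cases "s = t") auto

lemma has_deriv_inverse_power:
  assumes t: "t > 0"
  shows "((\<lambda>t. f t powr (- 2 / (n - 2))) has_real_derivative
           - 2 / (n - 2) * f' t / f t powr (n / (n - 2))) (at t)"
proof -
  have "- 2 / (n - 2) - 1 = - (n / (n - 2))"
    using n_gt_2 by (simp add: divide_simps)
  then show ?thesis
    using DERIV_fun_powr[OF has_deriv[OF t] pos[OF t], of "- 2 / (n - 2)"]
    by (simp add: powr_minus_divide)
qed

lemma eventually_large_if_deriv_nonneg:
  assumes t: "t > 0" and "f' t \<ge> 0"
  obtains T where "T > t" "\<And>s. s \<ge> T \<Longrightarrow> f s \<ge> K"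
proof -
  define a where "a = f' (t + 1)"
  have a: "a > 0"
    using deriv_strict_mono[OF t, of "t + 1"] assms by (simp add: a_def)
  define T where "T = t + 1 + \<bar>K\<bar> / a"
  have "T > t" using a by (simp add: T_def add_pos_nonneg)
  moreover have "f s \<ge> K" if "s \<ge> T" for s
  proof -
    have "T \<ge> t + 1" using a by (simp add: T_def)
    then have "f (t + 1) + a * (s - (t + 1)) \<le> f s"
      using that t has_deriv deriv_mono[of "t + 1"]
      by (intro DERIV_affine_lower_bound[where F' = f']) (auto simp: a_def)
    moreover have "a * (s - (t + 1)) \<ge> a * (\<bar>K\<bar> / a)"
      using that a by (intro mult_left_mono) (auto simp: T_def)
    moreover have "f (t + 1) > 0" using pos t by simp
    ultimately show ?thesis using a by simp
  qed
  ultimately show ?thesis by (rule that)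
qed

lemma deriv_ge_if_large:
  assumes s: "s > 0" and "f' s > 0"
    and large: "2 * \<bar>energy 1\<bar> \<le> (n - 2)\<^sup>2 * (f s powr (n / (n - 2)))\<^sup>2"
  shows "(n - 2) / 2 * f s powr (n / (n - 2)) \<le> f' s"
proof (rule power2_le_imp_le)
  show "((n - 2) / 2 * f s powr (n / (n - 2)))\<^sup>2 \<le> (f' s)\<^sup>2"
    using deriv_squared[OF s] large by (simp add: power_mult_distrib power_divide)
qed (use assms in simp)

lemma inverse_power_steep_if_deriv_nonneg:
  assumes t: "t > 0" and "f' t \<ge> 0"
  obtains T where "T > t" "\<And>s. s \<ge> T \<Longrightarrow> - 2 / (n - 2) * f' s / f s powr (n / (n - 2)) \<le> - 1"
proof -
  define q where "q = n / (n - 2)"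
  define K where "K = max 1 (2 * \<bar>energy 1\<bar> / (n - 2)\<^sup>2)"
  obtain T where T: "T > t" "\<And>s. s \<ge> T \<Longrightarrow> f s \<ge> K"
    using eventually_large_if_deriv_nonneg[OF assms, where K = K] by blast
  have "- 2 / (n - 2) * f' s / f s powr q \<le> - 1" if "s \<ge> T" for s
  proof -
    have s: "s > 0" using T t that by simp
    have f_ge: "f s \<ge> 1" "f s \<ge> 2 * \<bar>energy 1\<bar> / (n - 2)\<^sup>2"
      using T(2)[OF that] by (auto simp: K_def)
    have "f s powr 1 \<le> f s powr q"
      using f_ge n_gt_2 by (intro powr_mono) (auto simp: q_def)
    then have P_ge: "f s \<le> f s powr q" "1 \<le> f s powr q" using f_ge by auto
    have "f s powr q \<le> (f s powr q)\<^sup>2"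
      using mult_left_mono[OF P_ge(2), of "f s powr q"] by (simp add: power2_eq_square)
    then have "2 * \<bar>energy 1\<bar> / (n - 2)\<^sup>2 \<le> (f s powr q)\<^sup>2"
      using f_ge(2) P_ge(1) by linarith
    then have "2 * \<bar>energy 1\<bar> \<le> (n - 2)\<^sup>2 * (f s powr q)\<^sup>2"
      using n_gt_2 by (simp add: pos_divide_le_eq mult.commute)
    moreover have "f' s > 0"
      using deriv_strict_mono[OF t, of s] T(1) that assms(2) by linarith
    ultimately have "(n - 2) / 2 * f s powr q \<le> f' s"
      using deriv_ge_if_large[OF s] by (simp add: q_def)
    then have "f s powr q \<le> 2 / (n - 2) * f' s"
      using n_gt_2 by (simp add: field_simps)
    then have "1 \<le> 2 / (n - 2) * f' s / f s powr q"
      using P_ge(2) by (subst pos_le_divide_eq) auto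
    then show ?thesis by simp
  qed
  with T(1) show ?thesis unfolding q_def by (rule that)
qed

(* Otherwise f^(-2/(n-2)), which is positive, would decrease with slope at most -1 forever. *)
lemma deriv_neg:
  assumes t: "t > 0"
  shows "f' t < 0"
proof (rule ccontr)
  assume "\<not> f' t < 0"
  define D where "D s = - 2 / (n - 2) * f' s / f s powr (n / (n - 2))" for s
  define g where "g s = f s powr (- 2 / (n - 2))" for s
  have "f' t \<ge> 0" using \<open>\<not> f' t < 0\<close> by simp
  then obtain T where T: "T > t" "\<And>s. s \<ge> T \<Longrightarrow> D s \<le> - 1"
    using inverse_power_steep_if_deriv_nonneg[OF t] unfolding D_def by blast
  have g_pos: "g s > 0" if "s \<ge> T" for s
    using pos[of s] T(1) t that by (simp add: g_def)
  have "g (T + g T + 1) \<le> g T + (- 1) * (T + g T + 1 - T)"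
  proof (rule DERIV_affine_upper_bound[where F' = D])
    show "T \<le> T + g T + 1" using g_pos[of T] by simp
    show "(g has_real_derivative D s) (at s)" if "T \<le> s" for s
      using has_deriv_inverse_power[of s] T t that unfolding g_def[abs_def] D_def by simp
  qed (rule T(2))
  moreover have "g (T + g T + 1) > 0"
    using g_pos[of T] by (intro g_pos) simp
  ultimately show False by simp
qed

(* Positive energy gives f' <= -sqrt E, so f would become negative. *)
lemma energy_not_pos: "\<not> energy 1 > 0"
proof
  assume E: "energy 1 > 0"
  have deriv_le: "f' s \<le> - sqrt (energy 1)" if s: "s > 0" for s
  proof -
    have "energy 1 \<le> (f' s)\<^sup>2" using deriv_squared[OF s] by simp
    then have "sqrt (energy 1) \<le> \<bar>f' s\<bar>"
      using real_sqrt_le_mono[of "energy 1" "(f' s)\<^sup>2"] by simp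
    then show ?thesis using deriv_neg[OF s] by simp
  qed
  define t where "t = f 1 / sqrt (energy 1) + 2"
  have t: "t \<ge> 1" using pos[of 1] E by (simp add: t_def add_nonneg_nonneg)
  have "f t \<le> f 1 + (- sqrt (energy 1)) * (t - 1)"
    by (rule DERIV_affine_upper_bound[OF t, where F' = f']) (use has_deriv deriv_le in auto)
  also have "\<dots> = - sqrt (energy 1)" using E by (simp add: t_def algebra_simps)
  finally show False using pos[of t] t real_sqrt_gt_zero[OF E] by linarith
qed

(* Negative energy keeps f above a positive constant, so f'' is bounded below and f' would
   eventually become positive. *)
lemma energy_not_neg: "\<not> energy 1 < 0"
proof
  assume E: "energy 1 < 0"
  define q where "q = n / (n - 2)"
  define L where "L = (- energy 1 / (n - 2)\<^sup>2) powr (1 / (2 * q))"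
  have q: "q > 1" using n_gt_2 by (simp add: q_def)
  have L: "L > 0" using E n_gt_2 by (simp add: L_def)
  have f_ge: "L \<le> f s" if s: "s > 0" for s
  proof -
    have "(f s powr q)\<^sup>2 = f s powr (2 * q)"
      by (simp add: power2_eq_square powr_add[symmetric])
    moreover have "- energy 1 \<le> (n - 2)\<^sup>2 * (f s powr q)\<^sup>2"
      using deriv_squared[OF s] by (simp add: q_def) (smt (verit) zero_le_power2)
    ultimately have "- energy 1 / (n - 2)\<^sup>2 \<le> f s powr (2 * q)"
      using n_gt_2 by (subst pos_divide_le_eq) (auto simp: mult.commute)
    then have "L \<le> (f s powr (2 * q)) powr (1 / (2 * q))"
      unfolding L_def using E q by (intro powr_mono2) (auto simp: divide_nonpos_nonneg)
    also have "\<dots> = f s" using q pos[OF s] by (simp add: powr_powr)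
    finally show ?thesis .
  qed
  define \<delta> where "\<delta> = n * (n - 2) * L powr ((n + 2) / (n - 2))"
  have \<delta>: "\<delta> > 0" using n_gt_2 L by (simp add: \<delta>_def)
  have deriv2_ge: "\<delta> \<le> f'' s" if s: "s > 0" for s
    unfolding ode[OF s] \<delta>_def using f_ge[OF s] L n_gt_2
    by (intro mult_left_mono powr_mono2) auto
  define t where "t = - f' 1 / \<delta> + 2"
  have t: "t \<ge> 1" using deriv_neg[of 1] \<delta> by (simp add: t_def add_nonneg_nonneg)
  have "f' 1 + \<delta> * (t - 1) \<le> f' t"
    by (rule DERIV_affine_lower_bound[OF t, where F' = f'']) (use has_deriv2 deriv2_ge in auto)
  moreover have "f' 1 + \<delta> * (t - 1) = \<delta>" using \<delta> by (simp add: t_def algebra_simps)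
  ultimately show False using deriv_neg[of t] t \<delta> by simp
qed

lemma deriv_eq:
  assumes t: "t > 0"
  shows "f' t = - (n - 2) * f t powr (n / (n - 2))"
proof -
  have "(f' t)\<^sup>2 = ((n - 2) * f t powr (n / (n - 2)))\<^sup>2"
    using deriv_squared[OF t] energy_not_pos energy_not_neg by (simp add: power_mult_distrib)
  then have "\<bar>f' t\<bar> = \<bar>(n - 2) * f t powr (n / (n - 2))\<bar>"
    by (metis real_sqrt_abs)
  then have "- f' t = (n - 2) * f t powr (n / (n - 2))"
    using deriv_neg[OF t] n_gt_2 by simp
  then show ?thesis by (metis minus_minus mult_minus_left)
qed

lemma inverse_power_affine:
  obtains a where "a \<ge> 0" "\<And>t. t > 0 \<Longrightarrow> f t powr (- 2 / (n - 2)) = a + 2 * t"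
proof -
  define g where "g t = f t powr (- 2 / (n - 2)) - 2 * t" for t
  have "(g has_real_derivative 0) (at t)" if t: "t > 0" for t
  proof -
    have "- 2 / (n - 2) * f' t / f t powr (n / (n - 2)) = 2"
      using deriv_eq[OF t] pos[OF t] n_gt_2 by (simp add: divide_simps)
    then show ?thesis
      using DERIV_diff[OF has_deriv_inverse_power[OF t] DERIV_cmult[OF DERIV_ident, of 2]]
      unfolding g_def[abs_def] by simp
  qed
  then have g_const: "g t = g 1" if "t > 0" for t
    by (intro DERIV_isconst3[of 0 "t + 1"]) (use that in auto)
  have "g 1 \<ge> 0"
  proof (rule ccontr)
    assume "\<not> g 1 \<ge> 0"
    define t where "t = - g 1 / 4"
    have t: "t > 0" using \<open>\<not> g 1 \<ge> 0\<close> by (simp add: t_def)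
    have "g t > - 2 * t" using pos[OF t] by (simp add: g_def)
    then show False using g_const[OF t] t by (simp add: t_def)
  qed
  moreover have "f t powr (- 2 / (n - 2)) = g 1 + 2 * t" if "t > 0" for t
    using g_const[OF that] by (simp add: g_def)
  ultimately show ?thesis by (rule that)
qed

lemma closed_form:
  assumes lim: "(f \<longlongrightarrow> f 0) (at_right 0)"
  shows "f 0 > 0"
    and "\<And>t. t > 0 \<Longrightarrow> f t = (2 * t + f 0 powr (- 2 / (n - 2))) powr (- (n - 2) / 2)"
proof -
  obtain a where a: "a \<ge> 0" "\<And>t. t > 0 \<Longrightarrow> f t powr (- 2 / (n - 2)) = a + 2 * t"
    using inverse_power_affine by blast
  have inverse_exponent: "- 2 / (n - 2) * (- (n - 2) / 2) = 1"
    using n_gt_2 by (simp add: divide_simps)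
  have f_eq: "f t = (a + 2 * t) powr (- (n - 2) / 2)" if t: "t > 0" for t
  proof -
    have "(f t powr (- 2 / (n - 2))) powr (- (n - 2) / 2) = f t powr 1"
      by (simp only: powr_powr inverse_exponent)
    then show ?thesis using a(2)[OF t] pos[OF t] by simp
  qed
  have at_right: "eventually (\<lambda>t. t > 0) (at_right (0::real))"
    by (rule eventually_at_right_less)
  have "a \<noteq> 0"
  proof
    \<comment> \<open>for a = 0, f t = (2 t)^(-(n-2)/2) is unbounded near 0\<close>
    assume "a = 0"
    have "((\<lambda>t. f t * (2 * t) powr ((n - 2) / 2)) \<longlongrightarrow> f 0 * 0 powr ((n - 2) / 2)) (at_right 0)"
      using n_gt_2 at_right
      by (intro tendsto_intros lim tendsto_zero_powrI)
        (auto intro!: tendsto_eq_intros elim: eventually_mono)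
    moreover have "eventually (\<lambda>t. f t * (2 * t) powr ((n - 2) / 2) = 1) (at_right 0)"
      using at_right
    proof eventually_elim
      fix t :: real assume t: "t > 0"
      have "f t * (2 * t) powr ((n - 2) / 2) = (2 * t) powr (- (n - 2) / 2 + (n - 2) / 2)"
        using t by (simp add: f_eq \<open>a = 0\<close> powr_add)
      also have "- (n - 2) / 2 + (n - 2) / 2 = 0"
        by (simp add: divide_simps)
      finally show "f t * (2 * t) powr ((n - 2) / 2) = 1" using t by simp
    qed
    ultimately have "((\<lambda>t. 1) \<longlongrightarrow> f 0 * 0 powr ((n - 2) / 2)) (at_right (0::real))"
      by (rule Lim_transform_eventually)
    from tendsto_unique[OF trivial_limit_at_right_real this tendsto_const]
    show False using n_gt_2 by simp
  qed
  then have a_pos: "a > 0" using a(1) by simp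
  have "(f \<longlongrightarrow> (a + 2 * 0) powr (- (n - 2) / 2)) (at_right 0)"
  proof (rule Lim_transform_eventually)
    show "((\<lambda>t. (a + 2 * t) powr (- (n - 2) / 2)) \<longlongrightarrow> (a + 2 * 0) powr (- (n - 2) / 2)) (at_right 0)"
      using a_pos by (intro tendsto_intros) auto
    show "eventually (\<lambda>t. (a + 2 * t) powr (- (n - 2) / 2) = f t) (at_right 0)"
      using at_right by eventually_elim (simp add: f_eq)
  qed
  then have f0: "f 0 = a powr (- (n - 2) / 2)"
    using tendsto_unique[OF trivial_limit_at_right_real lim] by simp
  then show "f 0 > 0" using a_pos by simp
  have "f 0 powr (- 2 / (n - 2)) = a powr (- (n - 2) / 2 * (- 2 / (n - 2)))"
    unfolding f0 by (rule powr_powr)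
  also have "- (n - 2) / 2 * (- 2 / (n - 2)) = 1"
    using n_gt_2 by (simp add: divide_simps)
  finally have "f 0 powr (- 2 / (n - 2)) = a"
    using a_pos by simp
  then show "f t = (2 * t + f 0 powr (- 2 / (n - 2))) powr (- (n - 2) / 2)" if "t > 0" for t
    using f_eq[OF that] by (simp add: add.commute)
qed

lemma boundary_condition:
  assumes bd: "(f has_real_derivative - c * f 0 powr (n / (n - 2))) (at_right 0)"
  shows "c = n - 2 \<and> (\<forall>t>0. f t = (2 * t + f 0 powr (- 2 / (n - 2))) powr (- (n - 2) / 2))"
proof
  have lim: "(f \<longlongrightarrow> f 0) (at_right 0)"
    using DERIV_continuous[OF bd] by (simp add: continuous_within)
  then show "\<forall>t>0. f t = (2 * t + f 0 powr (- 2 / (n - 2))) powr (- (n - 2) / 2)"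
    by (intro allI impI closed_form(2)[OF lim])
  define a where "a = f 0 powr (- 2 / (n - 2))"
  define F where "F t = (2 * t + a) powr (- (n - 2) / 2)" for t
  have f0: "f 0 > 0" using closed_form(1)[OF lim] .
  have a: "a > 0" using f0 by (simp add: a_def)
  have "F 0 = f 0 powr (- 2 / (n - 2) * (- (n - 2) / 2))"
    by (simp only: F_def a_def powr_powr mult_zero_right add.left_neutral)
  also have "- 2 / (n - 2) * (- (n - 2) / 2) = 1"
    using n_gt_2 by (simp add: divide_simps)
  finally have F0: "f 0 = F 0" using f0 by simp
  have ev: "eventually (\<lambda>t. f t = F t) (at_right 0)"
    using eventually_at_right_less[of 0]
    by eventually_elim (simp add: closed_form(2)[OF lim] F_def a_def)
  have "a powr (- (n - 2) / 2 - 1) = f 0 powr (- 2 / (n - 2) * (- (n - 2) / 2 - 1))"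
    by (simp only: a_def powr_powr)
  also have "- 2 / (n - 2) * (- (n - 2) / 2 - 1) = n / (n - 2)"
    using n_gt_2 by (simp add: divide_simps)
  finally have P: "a powr (- (n - 2) / 2 - 1) = f 0 powr (n / (n - 2))" .
  have "(F has_real_derivative
      - (n - 2) / 2 * (2 * 0 + a) powr (- (n - 2) / 2 - of_nat 1) * 2) (at 0)"
    unfolding F_def[abs_def] by (rule DERIV_fun_powr) (use a in \<open>auto intro!: derivative_eq_intros\<close>)
  then have "(F has_real_derivative - (n - 2) * f 0 powr (n / (n - 2))) (at 0)"
    by (rule DERIV_cong) (use P in simp)
  then have "(F has_real_derivative - (n - 2) * f 0 powr (n / (n - 2))) (at_right 0)"
    by (rule has_field_derivative_at_within)
  moreover have "(F has_real_derivative - c * f 0 powr (n / (n - 2))) (at_right 0)"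
    using has_field_derivative_cong_eventually[OF ev F0] bd by simp
  ultimately have "- (n - 2) * f 0 powr (n / (n - 2)) = - c * f 0 powr (n / (n - 2))"
    by (rule has_field_derivative_unique[OF _ _ trivial_limit_at_right_real])
  then have "(n - 2) * f 0 powr (n / (n - 2)) = c * f 0 powr (n / (n - 2))"
    by (metis minus_mult_left neg_equal_iff_equal)
  then show "c = n - 2" using f0 by simp
qed

end

lemma w_fun_nonneg_if_lambda_b_zero:
  assumes lam: "lambda_b u b = 0" and \<mu>: "\<mu> > 0"
    and x: "x \<in> closure (half_ball \<mu>) - {0}"
  shows "w_fun u \<mu> b x \<ge> 0"
proof -
  have "Inf (ereal ` {lam. lam > 0 \<and>
      (\<forall>\<mu>. \<mu> > lam \<longrightarrow> (\<forall>x \<in> closure (half_ball \<mu>) - {0}. w_fun u \<mu> b x \<ge> 0))}) < ereal \<mu>"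
    using lam \<mu> unfolding lambda_b_def by simp
  then obtain lam where "lam < \<mu>"
    "\<forall>\<mu>. \<mu> > lam \<longrightarrow> (\<forall>x \<in> closure (half_ball \<mu>) - {0}. w_fun u \<mu> b x \<ge> 0)"
    by (auto simp: Inf_less_iff)
  then show ?thesis using x by blast
qed

lemma w_fun_at_inverted_point:
  fixes u :: "'a::euclidean_space \<times> real \<Rightarrow> real"
  defines "N \<equiv> dimn TYPE('a) - 2"
  assumes w: "w \<noteq> 0" and r: "r > 0"
  shows "w_fun u (1 / (r * norm w)) b (w /\<^sub>R (norm w)\<^sup>2)
    = norm w powr N * (u ((b, 0) + w) - r powr N * u ((b, 0) + r\<^sup>2 *\<^sub>R w))"
proof -
  define L where "L = norm w"
  define x where "x = w /\<^sub>R L\<^sup>2"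
  define y where "y = ((1 / (r * L))\<^sup>2 / (norm x)\<^sup>2) *\<^sub>R x"
  have L: "L > 0" using w by (simp add: L_def)
  have nx: "norm x = 1 / L"
    using L by (simp add: x_def L_def power2_eq_square field_simps)
  have ny: "norm y = 1 / (r\<^sup>2 * L)"
    using L r by (simp add: y_def nx power2_eq_square field_simps)
  have inv_powr: "(1 / c) powr (2 - dimn TYPE('a)) = c powr N" if "c > 0" for c
    using that by (simp add: N_def powr_divide powr_minus_divide[symmetric])
  have "kelvin_v u b x = L powr N * u ((b, 0) + w)"
  proof -
    have "x /\<^sub>R (norm x)\<^sup>2 = w"
      using L by (simp add: nx x_def L_def power2_eq_square field_simps)
    moreover have "(b, 0) + w = (fst w + b, snd w)" by (simp add: prod_eq_iff)
    ultimately show ?thesis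
      using inv_powr[OF L] by (simp add: kelvin_v_def shift_u_def nx)
  qed
  moreover have "kelvin_v u b y = (r\<^sup>2 * L) powr N * u ((b, 0) + r\<^sup>2 *\<^sub>R w)"
  proof -
    have "y /\<^sub>R (norm y)\<^sup>2 = r\<^sup>2 *\<^sub>R w"
      using L r by (simp add: ny y_def nx x_def power2_eq_square field_simps)
    moreover have "(b, 0) + r\<^sup>2 *\<^sub>R w = (fst (r\<^sup>2 *\<^sub>R w) + b, snd (r\<^sup>2 *\<^sub>R w))"
      by (simp add: prod_eq_iff)
    moreover have "r\<^sup>2 * L > 0" using L r by simp
    ultimately show ?thesis
      using inv_powr by (simp add: kelvin_v_def shift_u_def ny)
  qed
  ultimately have "w_fun u (1 / (r * L)) b x
      = L powr N * u ((b, 0) + w) - (1 / (r * L)) powr N / (1 / L) powr N * ((r\<^sup>2 * L) powr N * u ((b, 0) + r\<^sup>2 *\<^sub>R w))"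
    unfolding w_fun_def y_def[symmetric] unfolding nx N_def by simp
  also have "\<dots> = L powr N * (u ((b, 0) + w) - r powr N * u ((b, 0) + r\<^sup>2 *\<^sub>R w))"
    using L r by (simp add: powr_divide powr_mult power2_eq_square field_simps)
  finally show ?thesis by (simp add: L_def x_def)
qed

lemma dilation_ineq_if_lambda_b_zero:
  fixes u :: "'a::euclidean_space \<times> real \<Rightarrow> real"
  assumes lam: "lambda_b u b = 0" and z: "snd z > 0" and r: "0 < r" "r < 1"
  shows "r powr (dimn TYPE('a) - 2) * u ((b, 0) + r\<^sup>2 *\<^sub>R (z - (b, 0))) \<le> u z"
proof -
  define w where "w = z - (b, 0)"
  define x where "x = w /\<^sub>R (norm w)\<^sup>2"
  have "snd w > 0" using z by (simp add: w_def)
  then have w: "w \<noteq> 0" by auto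
  have "x \<in> half_ball (1 / (r * norm w))"
  proof -
    have "snd x > 0" using \<open>snd w > 0\<close> w by (simp add: x_def)
    moreover have "norm x < 1 / (r * norm w)"
      using w r by (simp add: x_def power2_eq_square field_simps)
    ultimately show ?thesis by (simp add: half_ball_def upper_half_def)
  qed
  moreover have "x \<noteq> 0" using w by (simp add: x_def)
  ultimately have "w_fun u (1 / (r * norm w)) b x \<ge> 0"
    using w r closure_subset
    by (intro w_fun_nonneg_if_lambda_b_zero[OF lam]) (auto simp: zero_less_mult_iff)
  then have "0 \<le> norm w powr (dimn TYPE('a) - 2) *
      (u z - r powr (dimn TYPE('a) - 2) * u ((b, 0) + r\<^sup>2 *\<^sub>R w))"
    using w_fun_at_inverted_point[OF w r(1), of u b] by (simp add: x_def w_def)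
  then show ?thesis using w by (simp add: zero_le_mult_iff w_def)
qed

lemma le_horizontal_translate:
  fixes u :: "'a::real_vector \<times> real \<Rightarrow> real"
  assumes dil: "\<And>b r. 0 < r \<Longrightarrow> r < 1 \<Longrightarrow>
      r powr N * u ((b, 0) + r\<^sup>2 *\<^sub>R ((y' + d, t) - (b, 0))) \<le> u (y' + d, t)"
    and cont: "isCont (\<lambda>s. u (y', s)) t"
  shows "u (y', t) \<le> u (y' + d, t)"
proof -
  have "r powr N * u (y', r\<^sup>2 * t) \<le> u (y' + d, t)" if r: "0 < r" "r < 1" for r
  proof -
    \<comment> \<open>the centre for which the dilation by r^2 maps (y' + d, t) to (y', r^2 t)\<close>
    define b where "b = y' - (r\<^sup>2 / (1 - r\<^sup>2)) *\<^sub>R d"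
    have "r\<^sup>2 < 1" using r by (simp add: power_less_one_iff)
    then have c: "(1 - r\<^sup>2) * (r\<^sup>2 / (1 - r\<^sup>2)) = r\<^sup>2" by simp
    have "b + r\<^sup>2 *\<^sub>R (y' + d - b) = (1 - r\<^sup>2) *\<^sub>R b + r\<^sup>2 *\<^sub>R (y' + d)"
      by (simp add: algebra_simps)
    also have "(1 - r\<^sup>2) *\<^sub>R b = (1 - r\<^sup>2) *\<^sub>R y' - r\<^sup>2 *\<^sub>R d"
      by (simp only: b_def scaleR_diff_right scaleR_scaleR c)
    finally have "b + r\<^sup>2 *\<^sub>R (y' + d - b) = y'"
      by (simp add: algebra_simps)
    then have "(b, 0) + r\<^sup>2 *\<^sub>R ((y' + d, t) - (b, 0)) = (y', r\<^sup>2 * t)"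
      by (simp add: prod_eq_iff)
    then show ?thesis using dil[OF r, of b] by simp
  qed
  then have "eventually (\<lambda>r. r powr N * u (y', r\<^sup>2 * t) \<le> u (y' + d, t)) (at_left 1)"
    using eventually_at_left_real[of 0 1] by (auto elim: eventually_mono)
  moreover have "((\<lambda>r. r\<^sup>2 * t) \<longlongrightarrow> t) (at_left (1::real))"
    by (auto intro!: tendsto_eq_intros)
  then have "((\<lambda>r. u (y', r\<^sup>2 * t)) \<longlongrightarrow> u (y', t)) (at_left 1)"
    using isCont_tendsto_compose[OF cont] by blast
  then have "((\<lambda>r. r powr N * u (y', r\<^sup>2 * t)) \<longlongrightarrow> 1 powr N * u (y', t)) (at_left 1)"
    by (intro tendsto_intros) auto
  ultimately show ?thesis
    using tendsto_le[OF trivial_limit_at_left_real tendsto_const] by fastforce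
qed

lemma horizontally_invariant_if_dilation_ineq:
  fixes u :: "'a::real_vector \<times> real \<Rightarrow> real"
  assumes dil: "\<And>b z r. snd z > 0 \<Longrightarrow> 0 < r \<Longrightarrow> r < 1 \<Longrightarrow>
      r powr N * u ((b, 0) + r\<^sup>2 *\<^sub>R (z - (b, 0))) \<le> u z"
    and cont: "\<And>x'. isCont (\<lambda>s. u (x', s)) t" and t: "t > 0"
  shows "u (x', t) = u (y', t)"
proof -
  have "u (x', t) \<le> u (x' + d, t)" for x' d
    using dil t by (intro le_horizontal_translate cont) auto
  from this[of x' "y' - x'"] this[of y' "x' - y'"] show ?thesis by simp
qed

lemma has_real_derivative_partial:
  assumes "C1_on S v" "e \<in> Basis" "z \<in> S"
  shows "((\<lambda>s. v (z + s *\<^sub>R e)) has_real_derivative partial v e z) (at 0)"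
  using assms unfolding C1_on_def partial_def by (simp add: DERIV_deriv_iff_real_differentiable)

lemma has_real_derivative_partial_vertical:
  fixes v :: "'a::euclidean_space \<times> real \<Rightarrow> real"
  assumes "C1_on upper_half v" "t > 0"
  shows "((\<lambda>s. v (x', s)) has_real_derivative partial v (0, 1) (x', t)) (at t)"
proof -
  have "(0::'a, 1::real) \<in> Basis" by (simp add: Basis_prod_def)
  moreover have "(x', t) \<in> upper_half" using assms(2) by (simp add: upper_half_def)
  ultimately have "((\<lambda>s. v ((x', t) + s *\<^sub>R (0, 1))) has_real_derivative partial v (0, 1) (x', t)) (at 0)"
    using assms(1) by (rule has_real_derivative_partial[rotated])
  then have "((\<lambda>s. v (x', s + t)) has_real_derivative partial v (0, 1) (x', t)) (at 0)"
    by (simp add: add.commute)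
  then show ?thesis using DERIV_shift[of "\<lambda>s. v (x', s)" _ 0 t] by simp
qed

lemma partial_horizontal_eq_0:
  fixes v :: "'a::real_normed_vector \<times> real \<Rightarrow> real"
  assumes "\<And>x'. v (x', snd z) = v z"
  shows "partial v (b, 0) z = 0"
proof -
  have "z + s *\<^sub>R (b, 0) = (fst z + s *\<^sub>R b, snd z)" for s
    by (simp add: prod_eq_iff)
  then have "(\<lambda>s. v (z + s *\<^sub>R (b, 0))) = (\<lambda>s. v z)"
    using assms by simp
  then show ?thesis unfolding partial_def by simp
qed

lemma laplacian_prod:
  fixes u :: "'a::euclidean_space \<times> real \<Rightarrow> real"
  shows "laplacian u z = (\<Sum>b\<in>Basis. partial (partial u (b, 0)) (b, 0) z)
    + partial (partial u (0, 1)) (0, 1) z"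
proof -
  let ?g = "\<lambda>e. partial (partial u e) e z"
  have "laplacian u z = sum ?g ((\<lambda>b. (b, 0)) ` Basis) + sum ?g ((\<lambda>s. (0, s)) ` Basis)"
    unfolding laplacian_def Basis_prod_def by (rule sum.union_disjoint) auto
  also have "\<dots> = (\<Sum>b\<in>Basis. ?g (b, 0)) + ?g (0, 1)"
    by (simp add: sum.reindex inj_on_def)
  finally show ?thesis .
qed

lemma laplacian_eq_vertical_if_horizontally_invariant:
  fixes u :: "'a::euclidean_space \<times> real \<Rightarrow> real"
  assumes inv: "\<And>x' y'. u (x', t) = u (y', t)"
  shows "laplacian u (x', t) = partial (partial u (0, 1)) (0, 1) (x', t)"
proof -
  have "partial u (b, 0) (y', t) = 0" for b y'
    using inv by (intro partial_horizontal_eq_0) auto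
  then have "partial (partial u (b, 0)) (b, 0) (x', t) = 0" for b
    by (intro partial_horizontal_eq_0) auto
  then show ?thesis by (simp add: laplacian_prod)
qed

lemma open_upper_half: "open (upper_half :: ('a::euclidean_space \<times> real) set)"
  unfolding upper_half_def by (intro open_Collect_less continuous_intros)

lemma isCont_vertical:
  fixes u :: "'a::euclidean_space \<times> real \<Rightarrow> real"
  assumes "C1_on upper_half u" "t > 0"
  shows "isCont (\<lambda>s. u (x', s)) t"
proof -
  have "continuous_on upper_half u" "(x', t) \<in> upper_half"
    using assms by (simp_all add: C1_on_def upper_half_def)
  then have "isCont u (x', t)"
    using continuous_on_eq_continuous_at[OF open_upper_half] by blast
  then show ?thesis by (rule isCont_o2[rotated]) simp
qed

lemma vertical_profile_solves_ode:
  fixes u :: "'a::euclidean_space \<times> real \<Rightarrow> real"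
  assumes n: "n > 2" and reg: "C2_on upper_half u"
    and eq: "\<forall>z\<in>upper_half. laplacian u z = n * (n - 2) * u z powr ((n + 2) / (n - 2))"
    and pos: "\<forall>z\<in>upper_half. u z > 0"
    and horizontal: "\<And>x' y' t. t > 0 \<Longrightarrow> u (x', t) = u (y', t)"
  shows "yamabe_ode_halfline n (\<lambda>t. u (0, t)) (\<lambda>t. partial u (0, 1) (0, t))
    (\<lambda>t. partial (partial u (0, 1)) (0, 1) (0, t))"
proof
  fix t :: real assume t: "t > 0"
  then have "(0, t) \<in> upper_half" by (simp add: upper_half_def)
  then show "u (0, t) > 0"
    and "partial (partial u (0, 1)) (0, 1) (0, t) = n * (n - 2) * u (0, t) powr ((n + 2) / (n - 2))"
    using pos eq laplacian_eq_vertical_if_horizontally_invariant[of u t 0] horizontal[OF t]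
    by auto
  have "C1_on upper_half u" "C1_on upper_half (partial u (0, 1))"
    using reg by (auto simp: C2_on_def Basis_prod_def)
  then show "((\<lambda>t. u (0, t)) has_real_derivative partial u (0, 1) (0, t)) (at t)"
    and "((\<lambda>t. partial u (0, 1) (0, t)) has_real_derivative
      partial (partial u (0, 1)) (0, 1) (0, t)) (at t)"
    using t by (auto intro: has_real_derivative_partial_vertical)
qed (rule n)

theorem proposition3p3:
  fixes u :: "'a::euclidean_space \<times> real \<Rightarrow> real"
    and cplus :: real
  defines "n \<equiv> real (DIM('a) + 1)"
  assumes n3: "DIM('a) \<ge> 2"
    and cpos: "cplus > 0"
    and reg2: "C2_on upper_half u"
    and reg1: "C1_closure upper_half u"
    and eq: "\<forall>z\<in>upper_half. laplacian u z = n * (n - 2) * u z powr ((n + 2) / (n - 2))"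
    and pos: "\<forall>z\<in>upper_half. u z > 0"
    and bdry: "\<forall>x'::'a. ((\<lambda>t. u (x', t)) has_real_derivative
                 (- cplus * u (x', 0) powr (n / (n - 2)))) (at_right 0)"
    and lam: "\<forall>b::'a. lambda_b u b = 0"
  shows "cplus = n - 2 \<and>
    (\<forall>x'::'a. \<forall>t::real. t > 0 \<longrightarrow>
       u (x', t) = u (0, t) \<and>
       u (0, t) = (2 * t + u (0, 0) powr (- 2 / (n - 2))) powr (- (n - 2) / 2))"
proof -
  have C1: "C1_on upper_half u" using reg2 by (simp add: C2_on_def)
  have horizontal: "u (x', t) = u (y', t)" if "t > 0" for x' y' t
    using dilation_ineq_if_lambda_b_zero[OF lam[rule_format]] isCont_vertical[OF C1] that
    by (intro horizontally_invariant_if_dilation_ineq) auto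
  have "n > 2" using n3 by (simp add: n_def)
  then interpret yamabe_ode_halfline n "\<lambda>t. u (0, t)" "\<lambda>t. partial u (0, 1) (0, t)"
    "\<lambda>t. partial (partial u (0, 1)) (0, 1) (0, t)"
    using reg2 eq pos horizontal by (rule vertical_profile_solves_ode)
  have "cplus = n - 2 \<and>
      (\<forall>t>0. u (0, t) = (2 * t + u (0, 0) powr (- 2 / (n - 2))) powr (- (n - 2) / 2))"
    using boundary_condition bdry by blast
  with horizontal show ?thesis by blast
qed

end
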